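(* Let $\mathrm{k}$ be an infinite field. For $n\in\{2,3\}$ and $P\in\mathrm{k}[T]$ with $\deg P\geq2$, the $\mathrm{k}$-algebra $\mathrm{k}[T]/(P^n)$ has infinitely many subalgebras.
   Context: Subalgebras are unital (contain $1$). *)

theory Defs
  imports "HOL-Computational_Algebra.Polynomial"
begin

text \<open>The k-algebra k[T]/(Q) is modelled concretely by its canonical representatives:
  the polynomials p with p mod Q = p, with addition, scalar multiplication by k,
  and multiplication (p, q) to (p * q) mod Q; its unit is 1 mod Q.\<close>

definition quot_rep :: "'a::field poly \<Rightarrow> 'a poly set" where
  "quot_rep Q = {p. p mod Q = p}"

definition quot_subalgebra :: "'a::field poly \<Rightarrow> 'a poly set \<Rightarrow> bool" where
  "quot_subalgebra Q A \<longleftrightarrow>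
     A \<subseteq> quot_rep Q \<and>
     (1 mod Q) \<in> A \<and>
     (\<forall>p\<in>A. \<forall>q\<in>A. p + q \<in> A) \<and>
     (\<forall>c. \<forall>p\<in>A. smult c p \<in> A) \<and>
     (\<forall>p\<in>A. \<forall>q\<in>A. (p * q) mod Q \<in> A)"

end

theory Submission
  imports Defs
begin

text \<open>An element R with R * R \<equiv> 0 (mod Q) and deg R < deg Q spans, together with 1, a subalgebra
  k + k R of k[T]/(Q), a copy of the dual numbers. For Q = P^n with n \<ge> 2 and deg P \<ge> 2 every
  R = P^(n-1) (T + c) qualifies, and distinct c give distinct subalgebras because P^(n-1) divides
  no nonzero constant; an infinite field therefore yields infinitely many subalgebras.\<close>

definition span_one_and :: "'a::field poly \<Rightarrow> 'a poly set" where
  "span_one_and R = {[:a:] + smult b R | a b. True}"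

lemma span_one_and_memI: "[:a:] + smult b R \<in> span_one_and R"
  unfolding span_one_and_def by blast

lemma span_one_and_memE:
  assumes "p \<in> span_one_and R"
  obtains a b where "p = [:a:] + smult b R"
  using assms unfolding span_one_and_def by blast

lemma quot_subalgebra_span_one_and:
  fixes Q R :: "'a::field poly"
  assumes square_zero: "Q dvd R * R" and deg: "degree R < degree Q"
  shows "quot_subalgebra Q (span_one_and R)"
proof -
  have rep: "([:a:] + smult b R) mod Q = [:a:] + smult b R" for a b
  proof (rule mod_poly_less)
    have "degree ([:a:] + smult b R) \<le> degree R"
      by (rule order.trans[OF degree_add_le_max]) auto
    then show "degree ([:a:] + smult b R) < degree Q" using deg by linarith
  qed
  have mult: "(([:a:] + smult b R) * ([:a':] + smult b' R)) mod Q
      = [:a * a':] + smult (a * b' + a' * b) R" for a b a' b'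
  proof -
    have "([:a:] + smult b R) * ([:a':] + smult b' R)
        = ([:a * a':] + smult (a * b' + a' * b) R) + smult (b * b') (R * R)"
      by (simp add: algebra_simps smult_add_left)
    moreover have "smult (b * b') (R * R) mod Q = 0"
      using square_zero by (simp add: mod_smult_left)
    ultimately show ?thesis
      by (simp only: poly_mod_add_left[of "smult (b * b') (R * R)", simplified add.commute] rep add_0_right)
  qed
  have "1 mod Q = [:1:] + smult 0 R"
    using deg by (simp add: mod_poly_less)
  then have one: "1 mod Q \<in> span_one_and R"
    by (simp only: span_one_and_memI)
  show ?thesis unfolding quot_subalgebra_def
  proof (intro conjI ballI allI one)
    show "span_one_and R \<subseteq> quot_rep Q"
      by (auto simp: quot_rep_def rep elim: span_one_and_memE)
  next
    fix p q assume "p \<in> span_one_and R" "q \<in> span_one_and R"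
    then obtain a b a' b' where "p = [:a:] + smult b R" "q = [:a':] + smult b' R"
      by (metis span_one_and_memE)
    moreover have "[:a:] + smult b R + ([:a':] + smult b' R) = [:a + a':] + smult (b + b') R"
      by (simp add: algebra_simps smult_add_left)
    ultimately show "p + q \<in> span_one_and R" "p * q mod Q \<in> span_one_and R"
      by (simp_all only: mult span_one_and_memI)
  next
    fix c p assume "p \<in> span_one_and R"
    then obtain a b where "p = [:a:] + smult b R" by (rule span_one_and_memE)
    then have "smult c p = [:c * a:] + smult (c * b) R" by (simp add: smult_add_right)
    then show "smult c p \<in> span_one_and R" by (simp only: span_one_and_memI)
  qed
qed

lemma inj_span_one_and_linear_multiple:
  fixes S :: "'a::field poly"
  assumes "degree S > 0"
  shows "inj (\<lambda>c. span_one_and (S * [:c, 1:]))"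
proof (rule injI)
  fix c d :: 'a
  assume "span_one_and (S * [:c, 1:]) = span_one_and (S * [:d, 1:])"
  moreover have "S * [:c, 1:] \<in> span_one_and (S * [:c, 1:])"
    using span_one_and_memI[of 0 1] by simp
  ultimately obtain a b where "S * [:c, 1:] = [:a:] + smult b (S * [:d, 1:])"
    by (metis span_one_and_memE)
  then have eq: "S * [:c, 1:] = [:a:] + S * smult b [:d, 1:]"
    by (simp only: mult_smult_right)
  then have "[:a:] = S * [:c, 1:] - S * smult b [:d, 1:]"
    by (metis add_diff_cancel_right')
  then have "S dvd [:a:]" by (metis dvd_diff dvd_triv_left)
  then have "a = 0"
    using assms dvd_imp_degree_le[of S "[:a:]"] by fastforce
  with eq have "S * [:c, 1:] = S * smult b [:d, 1:]"
    by simp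
  then have "[:c, 1:] = smult b [:d, 1:]"
    using assms by (metis degree_0 less_irrefl mult_left_cancel)
  then show "c = d" by simp
qed

lemma power_dvd_square_of_pred_power_mult:
  fixes P X :: "'a::comm_semiring_1"
  assumes "n \<ge> 2"
  shows "P ^ n dvd (P ^ (n - 1) * X) * (P ^ (n - 1) * X)"
proof -
  have "(P ^ (n - 1) * X) * (P ^ (n - 1) * X) = P ^ n * (P ^ (n - 2) * X * X)"
    using assms by (simp add: algebra_simps flip: power_add) (simp add: numeral_2_eq_2)
  then show ?thesis by simp
qed

lemma degree_pred_power_mult_linear_less:
  fixes P :: "'a::field poly"
  assumes "n \<ge> 2" and "degree P \<ge> 2"
  shows "degree (P ^ (n - 1) * [:c, 1:]) < degree (P ^ n)"
proof -
  have "P \<noteq> 0" using assms(2) by auto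
  then have "degree (P ^ (n - 1) * [:c, 1:]) = (n - 1) * degree P + 1"
    by (subst degree_mult_eq) (simp_all add: degree_power_eq del: mult_pCons_right)
  also have "\<dots> < n * degree P"
    using assms by (cases n) auto
  finally show ?thesis using \<open>P \<noteq> 0\<close> by (simp add: degree_power_eq)
qed

theorem lemma3p6:
  fixes P :: "'k::field poly" and n :: nat
  assumes "infinite (UNIV :: 'k set)"
    and "n \<in> {2, 3}"
    and "degree P \<ge> 2"
  shows "infinite {A. quot_subalgebra (P ^ n) A}"
proof -
  let ?A = "\<lambda>c::'k. span_one_and (P ^ (n - 1) * [:c, 1:])"
  have n: "n \<ge> 2" using assms(2) by auto
  have "range ?A \<subseteq> {A. quot_subalgebra (P ^ n) A}"
    using quot_subalgebra_span_one_and[OF power_dvd_square_of_pred_power_mult[OF n]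
        degree_pred_power_mult_linear_less[OF n assms(3)]] by auto
  moreover have "P \<noteq> 0" using assms(3) by auto
  then have "degree (P ^ (n - 1)) > 0"
    using n assms(3) by (simp add: degree_power_eq)
  then have "infinite (range ?A)"
    using assms(1) inj_span_one_and_linear_multiple finite_imageD by blast
  ultimately show ?thesis by (rule infinite_super)
qed

end
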